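(* Let $K=\mathrm{SU}(2)$ and define $\Pi\colon K^2\to[-2,2]^2$ by $\Pi(a,b)=(\mathrm{tr}(a),\mathrm{tr}(aba^{-1}b^{-1}))$. Then $$\Pi(K^2)=D:=\{(x,t)\in[-2,2]^2 : x^2-2\le t\}.$$ Moreover, the pushforward under $\Pi$ of the Haar measure on $K^2$ is equivalent (mutually absolutely continuous) to the Lebesgue measure restricted to $D$.
   Context: Traces of elements of $\mathrm{SU}(2)$ are real and lie in $[-2,2]$. *)

theory Defs
  imports "HOL-Analysis.Analysis"
begin

definition conj_transpose :: "complex^2^2 \<Rightarrow> complex^2^2" where
  "conj_transpose A = (\<chi> i j. cnj (A $ j $ i))"

definition SU2 :: "(complex^2^2) set" where
  "SU2 = {A. A ** conj_transpose A = mat 1 \<and> det A = 1}"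

text \<open>The map Pi(a,b) = (tr a, tr(a b a^-1 b^-1)) (traces are real on SU(2)).\<close>

definition Pi_map :: "(complex^2^2) \<times> (complex^2^2) \<Rightarrow> real \<times> real" where
  "Pi_map p = (case p of (a, b) \<Rightarrow>
     (Re (trace a), Re (trace (a ** b ** matrix_inv a ** matrix_inv b))))"

definition D_set :: "(real \<times> real) set" where
  "D_set = {(x, t). x \<in> {-2..2} \<and> t \<in> {-2..2} \<and> x\<^sup>2 - 2 \<le> t}"

definition haar_SU2_sq :: "((complex^2^2) \<times> (complex^2^2)) measure \<Rightarrow> bool" where
  "haar_SU2_sq \<mu> \<longleftrightarrow>
     space \<mu> = SU2 \<times> SU2 \<and>
     sets \<mu> = sets (restrict_space borel (SU2 \<times> SU2)) \<and>
     finite_measure \<mu> \<and> emeasure \<mu> (space \<mu>) \<noteq> 0 \<and>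
     (\<forall>g \<in> SU2 \<times> SU2. \<forall>A \<in> sets \<mu>.
        emeasure \<mu> ((\<lambda>x. (fst g ** fst x, snd g ** snd x)) -` A \<inter> space \<mu>) = emeasure \<mu> A)"

end

theory Submission
  imports Defs
begin

(* Write SU(2) as the unit quaternions (a0, a) in R x R^3. Then tr a = 2 a0 and
   tr (a b a^-1 b^-1) = 2 - 4 |a x b|^2, and Lagrange's identity
   |a x b|^2 <= |a|^2 |b|^2 = (1 - a0^2) (1 - b0^2) cuts the image down to D; explicit
   witnesses show that all of D is attained.
   For the measure class, pull back along the radial projection (p, q) |-> (p / |p|, q / |q|)
   of (R^4 - 0)^2 onto K^2. Fubini on mu x lebesgue, left invariance of mu and the linearity
   of right translations in quaternion coordinates show that a set is Haar-null iff its
   pull-back is Lebesgue-null. The pulled-back Pi is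
   (2 a0 / |p|, 2 - 4 |a x b|^2 / (|p|^2 |q|^2)) for p = (a0, a), q = (b0, b); for fixed a, b
   it maps each of the half-planes b0 > 0 and b0 < 0 diffeomorphically onto the lens
   2 - s (4 - x^2) < t < 2, where s is the squared sine of the angle between a and b, and
   these lenses exhaust D up to a null set as s -> 1. *)

lemma matrix_mult_2_nth:
  "((A :: 'a::semiring_1^2^2) ** B) $ i $ j = A $ i $ 1 * B $ 1 $ j + A $ i $ 2 * B $ 2 $ j"
  by (simp add: matrix_matrix_mult_def sum_2)

lemma trace_2: "trace (A :: 'a::semiring_1^2^2) = A $ 1 $ 1 + A $ 2 $ 2"
  by (simp add: trace_def sum_2)

lemma matrix_2_eq_iff:
  "(A :: 'a^2^2) = B \<longleftrightarrow> A$1$1 = B$1$1 \<and> A$1$2 = B$1$2 \<and> A$2$1 = B$2$1 \<and> A$2$2 = B$2$2"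
  by (auto simp: vec_eq_iff forall_2)

lemma continuous_on_matrix_mult [continuous_intros]:
  fixes f :: "'a::topological_space \<Rightarrow> 'b::real_normed_algebra_1^'n^'m"
  shows "continuous_on S f \<Longrightarrow> continuous_on S g \<Longrightarrow> continuous_on S (\<lambda>x. f x ** g x)"
  unfolding matrix_matrix_mult_def by (intro continuous_intros)

lemma continuous_on_conj_transpose [continuous_intros]:
  "continuous_on S f \<Longrightarrow> continuous_on S (\<lambda>x. conj_transpose (f x))"
  unfolding conj_transpose_def by (intro continuous_intros)

lemma continuous_on_trace [continuous_intros]:
  fixes f :: "'a::topological_space \<Rightarrow> 'b::real_normed_algebra_1^'n^'n"
  shows "continuous_on S f \<Longrightarrow> continuous_on S (\<lambda>x. trace (f x))"
  unfolding trace_def by (intro continuous_intros)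

lemma norm_vec3_sq: "(norm (a :: real^3))\<^sup>2 = (a $ 1)\<^sup>2 + (a $ 2)\<^sup>2 + (a $ 3)\<^sup>2"
  unfolding power2_norm_eq_inner by (simp add: inner_vec_def sum_3 power2_eq_square)

type_synonym quat = "real \<times> (real^3)"

lemma norm_quat_sq: "(norm (q :: quat))\<^sup>2 = (fst q)\<^sup>2 + (snd q $ 1)\<^sup>2 + (snd q $ 2)\<^sup>2 + (snd q $ 3)\<^sup>2"
  by (cases q) (simp add: norm_Pair norm_vec3_sq)

lemma norm_quat_eq_1_iff: "norm (q :: quat) = 1 \<longleftrightarrow> (fst q)\<^sup>2 + (snd q $ 1)\<^sup>2 + (snd q $ 2)\<^sup>2 + (snd q $ 3)\<^sup>2 = 1"
proof -
  have "norm q = 1 \<longleftrightarrow> (norm q)\<^sup>2 = 1\<^sup>2"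
    using power2_eq_iff_nonneg[of "norm q" 1] by simp
  then show ?thesis
    unfolding norm_quat_sq by simp
qed

definition quat_matrix :: "quat \<Rightarrow> complex^2^2" where
  "quat_matrix q =
     (let z = Complex (fst q) (snd q $ 1); w = Complex (snd q $ 2) (snd q $ 3)
      in vector [vector [z, - cnj w], vector [w, cnj z]])"

lemma quat_matrix_nth [simp]:
  "quat_matrix (a0, a) $ 1 $ 1 = Complex a0 (a $ 1)"
  "quat_matrix (a0, a) $ 1 $ 2 = Complex (- a $ 2) (a $ 3)"
  "quat_matrix (a0, a) $ 2 $ 1 = Complex (a $ 2) (a $ 3)"
  "quat_matrix (a0, a) $ 2 $ 2 = Complex a0 (- a $ 1)"
  by (simp_all add: quat_matrix_def Let_def complex_eq_iff)

lemma linear_quat_matrix: "linear quat_matrix"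
  by (rule linearI) (auto simp: matrix_2_eq_iff complex_eq_iff)

lemma continuous_on_quat_matrix [continuous_intros]:
  "continuous_on S f \<Longrightarrow> continuous_on S (\<lambda>x. quat_matrix (f x))"
  using linear_continuous_on[OF linear_quat_matrix[unfolded linear_conv_bounded_linear]]
  by (rule continuous_on_compose2) auto

(* The sign of the cross product, opposite to Hamilton's, is the one that makes quat_matrix
   multiplicative. *)
fun quat_mult :: "quat \<Rightarrow> quat \<Rightarrow> quat" where
  "quat_mult (a0, a) (b0, b) = (a0 * b0 - a \<bullet> b, a0 *\<^sub>R b + b0 *\<^sub>R a - cross3 a b)"

lemma quat_matrix_mult: "quat_matrix p ** quat_matrix q = quat_matrix (quat_mult p q)"
  by (cases p; cases q)
     (simp add: matrix_2_eq_iff matrix_mult_2_nth cross_components inner_vec_def sum_3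
       complex_eq_iff algebra_simps)

lemma norm_quat_mult: "norm (quat_mult p q) = norm p * norm q"
proof -
  obtain a0 a b0 b where pq: "p = (a0, a)" "q = (b0, b)" by fastforce
  have "(norm (quat_mult (a0, a) (b0, b)))\<^sup>2 = (norm (a0, a) * norm (b0, b))\<^sup>2"
    unfolding power_mult_distrib norm_quat_sq
    by (simp add: cross_components inner_vec_def sum_3) algebra
  then show ?thesis
    by (simp add: pq)
qed

lemma linear_quat_mult_right: "linear (\<lambda>p. quat_mult p q)"
  by (cases q, intro linearI)
     (auto simp: cross_add_left cross_mult_left inner_add_left algebra_simps)

lemma quat_matrix_in_SU2:
  assumes "norm q = 1"
  shows "quat_matrix q \<in> SU2"
proof -
  obtain a0 a where q: "q = (a0, a)" by fastforce
  have "a0 * a0 + a $ 1 * a $ 1 + a $ 2 * a $ 2 + a $ 3 * a $ 3 = 1"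
    using assms by (simp add: q norm_quat_eq_1_iff power2_eq_square)
  then show ?thesis
    by (simp add: q SU2_def conj_transpose_def matrix_2_eq_iff matrix_mult_2_nth det_2 mat_def
        complex_eq_iff algebra_simps)
qed

lemma SU2_imp_quat_matrix:
  assumes "A \<in> SU2"
  obtains q where "norm q = 1" "A = quat_matrix q"
proof -
  have "A ** conj_transpose A = mat 1" and det: "det A = 1"
    using assms by (auto simp: SU2_def)
  then have "conj_transpose A ** A = mat 1"
    using matrix_left_right_inverse by blast
  define z u w v where "z = A$1$1" "u = A$1$2" "w = A$2$1" "v = A$2$2"
  have unit: "cnj z * z + cnj w * w = 1" and orth: "cnj z * u + cnj w * v = 0"
    using \<open>conj_transpose A ** A = mat 1\<close>
    by (auto simp: z_u_w_v_def matrix_2_eq_iff matrix_mult_2_nth conj_transpose_def mat_def)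
  have "z * v - u * w = 1"
    using det by (simp add: z_u_w_v_def det_2)
  then have v: "v = cnj z" and u: "u = - cnj w"
    using unit orth by algebra+
  define q where "q = (Re z, vector [Im z, Re w, Im w] :: real^3)"
  have "A = quat_matrix q"
    using u v by (simp add: q_def z_u_w_v_def matrix_2_eq_iff complex_eq_iff)
  moreover have "norm q = 1"
    using arg_cong[OF unit, of Re] by (simp add: q_def norm_quat_eq_1_iff power2_eq_square)
  ultimately show ?thesis
    using that by blast
qed

lemma SU2_mult: "A \<in> SU2 \<Longrightarrow> B \<in> SU2 \<Longrightarrow> A ** B \<in> SU2"
  by (metis SU2_imp_quat_matrix quat_matrix_in_SU2 quat_matrix_mult norm_quat_mult mult_1)

lemma matrix_inv_SU2:
  assumes "A \<in> SU2"
  shows "matrix_inv A = conj_transpose A"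
proof -
  have right: "A ** conj_transpose A = mat 1"
    using assms by (auto simp: SU2_def)
  then have "conj_transpose A ** A = mat 1"
    using matrix_left_right_inverse by blast
  then have "A ** matrix_inv A = mat 1 \<and> matrix_inv A ** A = mat 1"
    unfolding matrix_inv_def using right by (intro someI[where P = "\<lambda>B. A ** B = mat 1 \<and> B ** A = mat 1"]) blast
  then have "matrix_inv A = matrix_inv A ** (A ** conj_transpose A)"
    using right by simp
  also have "\<dots> = conj_transpose A"
    using \<open>A ** matrix_inv A = mat 1 \<and> matrix_inv A ** A = mat 1\<close> by (simp add: matrix_mul_assoc)
  finally show ?thesis .
qed

definition Pi_adj :: "(complex^2^2) \<times> (complex^2^2) \<Rightarrow> real \<times> real" where
  "Pi_adj x = (Re (trace (fst x)),
     Re (trace (fst x ** snd x ** conj_transpose (fst x) ** conj_transpose (snd x))))"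

lemma Pi_map_eq_Pi_adj: "x \<in> SU2 \<times> SU2 \<Longrightarrow> Pi_map x = Pi_adj x"
  by (auto simp: Pi_map_def Pi_adj_def matrix_inv_SU2)

lemma continuous_on_Pi_adj: "continuous_on S Pi_adj"
  unfolding Pi_adj_def by (intro continuous_intros)

lemma Pi_adj_quat_matrix:
  "Pi_adj (quat_matrix p, quat_matrix q) =
     (2 * fst p, 2 * (norm p * norm q)\<^sup>2 - 4 * (norm (cross3 (snd p) (snd q)))\<^sup>2)"
proof -
  obtain a0 a b0 b where pq: "p = (a0, a)" "q = (b0, b)" by fastforce
  have "Pi_adj (quat_matrix (a0, a), quat_matrix (b0, b)) =
     (2 * a0, 2 * (norm (a0, a) * norm (b0, b))\<^sup>2 - 4 * (norm (cross3 a b))\<^sup>2)"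
    unfolding power_mult_distrib norm_quat_sq norm_vec3_sq
    by (simp add: Pi_adj_def trace_2 matrix_mult_2_nth conj_transpose_def cross_components) algebra
  then show ?thesis
    by (simp add: pq)
qed

lemma Pi_map_quat_matrix:
  fixes p q :: quat
  assumes "norm p = 1" "norm q = 1"
  shows "Pi_map (quat_matrix p, quat_matrix q) = (2 * fst p, 2 - 4 * (norm (cross3 (snd p) (snd q)))\<^sup>2)"
  using assms by (simp add: Pi_map_eq_Pi_adj quat_matrix_in_SU2 Pi_adj_quat_matrix)

lemma commutator_coords_in_D_set:
  fixes p q :: quat
  assumes "norm p = 1" "norm q = 1"
  shows "(2 * fst p, 2 - 4 * (norm (cross3 (snd p) (snd q)))\<^sup>2) \<in> D_set"
proof -
  obtain a0 a b0 b where pq: "p = (a0, a)" "q = (b0, b)" by fastforce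
  have a: "a0\<^sup>2 + (norm a)\<^sup>2 = 1" and b: "b0\<^sup>2 + (norm b)\<^sup>2 = 1"
    using assms by (simp_all add: pq norm_quat_eq_1_iff norm_vec3_sq add.assoc)
  have "(norm (cross3 a b))\<^sup>2 \<le> (norm a)\<^sup>2 * (norm b)\<^sup>2"
    using norm_cross_dot[of a b] zero_le_power2[of "a \<bullet> b"] unfolding power_mult_distrib by linarith
  also have "\<dots> \<le> (norm a)\<^sup>2"
    using b zero_le_power2[of b0] by (intro mult_left_le) (linarith, simp)
  finally have cross: "(norm (cross3 a b))\<^sup>2 \<le> 1 - a0\<^sup>2"
    using a by linarith
  have "a0\<^sup>2 \<le> 1"
    using a zero_le_power2[of "norm a"] by linarith
  then have "\<bar>a0\<bar> \<le> 1"
    by (simp add: abs_square_le_1)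
  moreover have "(norm (cross3 a b))\<^sup>2 \<le> 1"
    using cross zero_le_power2[of a0] by linarith
  ultimately show ?thesis
    using cross zero_le_power2[of "norm (cross3 a b)"]
    by (auto simp: pq D_set_def power_mult_distrib)
qed

lemma D_set_subset_commutator_coords:
  assumes "(x, t) \<in> D_set"
  obtains p q :: quat where "norm p = 1" "norm q = 1"
    "(2 * fst p, 2 - 4 * (norm (cross3 (snd p) (snd q)))\<^sup>2) = (x, t)"
proof -
  have x: "x\<^sup>2 \<le> 4" and t: "x\<^sup>2 - 2 \<le> t" "t \<le> 2"
    using assms by (auto simp: D_set_def abs_square_le_1[of "x/2", symmetric] abs_le_iff power_divide)
  define y where "y = sqrt (1 - x\<^sup>2 / 4)"
  \<comment> \<open>for \<open>x\<^sup>2 = 4\<close> the division by zero makes \<open>c = 0\<close>, which is right since then \<open>t = 2\<close>\<close>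
  define c where "c = sqrt ((2 - t) / (4 - x\<^sup>2))"
  have y2: "y\<^sup>2 = 1 - x\<^sup>2 / 4"
    using x by (simp add: y_def)
  have c2: "c\<^sup>2 = (2 - t) / (4 - x\<^sup>2)"
    using x t by (simp add: c_def)
  have "c\<^sup>2 \<le> 1" and c2_t: "(4 - x\<^sup>2) * c\<^sup>2 = 2 - t"
    using x t by (auto simp: c2 divide_le_eq_1)
  define p where "p = (x / 2, vector [y, 0, 0] :: real^3)"
  define q where "q = (sqrt (1 - c\<^sup>2), vector [0, c, 0] :: real^3)"
  have "norm p = 1" "norm q = 1"
    using y2 \<open>c\<^sup>2 \<le> 1\<close> by (simp_all add: p_def q_def norm_quat_eq_1_iff power_divide)
  moreover have "(norm (cross3 (snd p) (snd q)))\<^sup>2 = y\<^sup>2 * c\<^sup>2"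
    unfolding norm_vec3_sq by (simp add: p_def q_def cross_components power_mult_distrib)
  then have "(2 * fst p, 2 - 4 * (norm (cross3 (snd p) (snd q)))\<^sup>2) = (x, t)"
    using c2_t by (simp add: p_def y2 algebra_simps)
  ultimately show ?thesis
    using that by blast
qed

lemma Pi_map_image: "Pi_map ` (SU2 \<times> SU2) = D_set"
proof (rule equalityI)
  show "Pi_map ` (SU2 \<times> SU2) \<subseteq> D_set"
  proof (rule image_subsetI)
    fix x assume "x \<in> SU2 \<times> SU2"
    then obtain A B where x: "x = (A, B)" "A \<in> SU2" "B \<in> SU2"
      by blast
    obtain p q where "norm p = 1" "A = quat_matrix p" "norm q = 1" "B = quat_matrix q"
      using SU2_imp_quat_matrix[OF x(2)] SU2_imp_quat_matrix[OF x(3)] by metis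
    with x(1) show "Pi_map x \<in> D_set"
      by (simp add: Pi_map_quat_matrix commutator_coords_in_D_set)
  qed
  show "D_set \<subseteq> Pi_map ` (SU2 \<times> SU2)"
  proof safe
    fix x t assume "(x, t) \<in> D_set"
    then obtain p q :: quat where "norm p = 1" "norm q = 1"
      "(2 * fst p, 2 - 4 * (norm (cross3 (snd p) (snd q)))\<^sup>2) = (x, t)"
      by (rule D_set_subset_commutator_coords)
    then have "Pi_map (quat_matrix p, quat_matrix q) = (x, t)"
      by (simp add: Pi_map_quat_matrix)
    moreover have "(quat_matrix p, quat_matrix q) \<in> SU2 \<times> SU2"
      using \<open>norm p = 1\<close> \<open>norm q = 1\<close> by (simp add: quat_matrix_in_SU2)
    ultimately show "(x, t) \<in> Pi_map ` (SU2 \<times> SU2)"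
      by (metis image_eqI)
  qed
qed

lemma borel_Collect_continuous_on_open:
  assumes "open S" "continuous_on S f" "E \<in> sets borel"
  shows "{x \<in> S. f x \<in> E} \<in> sets borel"
proof -
  have "f -` E \<inter> S \<in> sets (restrict_space borel S)"
    using measurable_sets[OF borel_measurable_continuous_on_restrict[OF assms(2)] assms(3)]
    by (simp add: space_restrict_space)
  then have "f -` E \<inter> S \<in> sets borel"
    using sets_restrict_space_iff[of S borel] \<open>open S\<close> by auto
  moreover have "{x \<in> S. f x \<in> E} = f -` E \<inter> S"
    by auto
  ultimately show ?thesis
    by simp
qed

lemma negligible_iff_lborel_null: "S \<in> sets borel \<Longrightarrow> negligible S \<longleftrightarrow> emeasure lborel S = 0"
  by (simp add: negligible_iff_null_sets null_sets_completion_iff null_sets_def)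

lemma AE_lborel_iff_negligible: "(AE x in lborel. P x) \<longleftrightarrow> negligible {x. \<not> P x}"
  using completion.AE_iff_null_sets[where M = lborel and P = P]
  by (simp add: AE_completion_iff negligible_iff_null_sets)

lemma negligible_iff_AE_negligible_sections:
  fixes X :: "('a::euclidean_space \<times> 'b::euclidean_space) set"
  assumes "X \<in> sets borel"
  shows "negligible X \<longleftrightarrow> (AE x in lborel. negligible (Pair x -` X))"
proof -
  have X: "X \<in> sets (lborel \<Otimes>\<^sub>M lborel)"
    using assms by (subst lborel_prod) simp
  have "negligible X \<longleftrightarrow> emeasure (lborel \<Otimes>\<^sub>M lborel) X = 0"
    using negligible_iff_lborel_null[OF assms] by (simp add: lborel_prod)
  also have "\<dots> \<longleftrightarrow> (\<integral>\<^sup>+x. emeasure lborel (Pair x -` X) \<partial>lborel) = 0"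
    by (simp add: lborel.emeasure_pair_measure_alt[OF X])
  also have "\<dots> \<longleftrightarrow> (AE x in lborel. emeasure lborel (Pair x -` X) = 0)"
    by (rule nn_integral_0_iff_AE[OF lborel.measurable_emeasure_Pair[OF X]])
  also have "\<dots> \<longleftrightarrow> (AE x in lborel. negligible (Pair x -` X))"
    using sets_Pair1[OF X] by (simp add: negligible_iff_lborel_null)
  finally show ?thesis .
qed

lemma negligible_preimage_iff_diffeomorphic:
  fixes f :: "'a::euclidean_space \<Rightarrow> 'b::euclidean_space" and g :: "'b \<Rightarrow> 'a"
  assumes "DIM('a) = DIM('b)" "f differentiable_on S" "g differentiable_on T"
    and "\<And>x. x \<in> S \<Longrightarrow> f x \<in> T \<and> g (f x) = x"
    and "\<And>y. y \<in> T \<Longrightarrow> g y \<in> S \<and> f (g y) = y"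
  shows "negligible {x \<in> S. f x \<in> H} \<longleftrightarrow> negligible (T \<inter> H)"
proof -
  have preimage: "{x \<in> S. f x \<in> H} = g ` (T \<inter> H)"
    using assms(4,5) by (auto simp: image_iff) (metis IntI)
  have image: "T \<inter> H = f ` {x \<in> S. f x \<in> H}"
    using assms(4,5) by (auto simp: image_iff) metis
  show ?thesis
  proof
    assume "negligible {x \<in> S. f x \<in> H}"
    then have "negligible (f ` {x \<in> S. f x \<in> H})"
      using assms(1) by (intro negligible_differentiable_image_negligible differentiable_on_subset[OF assms(2)]) auto
    then show "negligible (T \<inter> H)"
      unfolding image .
  next
    assume "negligible (T \<inter> H)"
    then have "negligible (g ` (T \<inter> H))"
      using assms(1) by (intro negligible_differentiable_image_negligible differentiable_on_subset[OF assms(3)]) auto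
    then show "negligible {x \<in> S. f x \<in> H}"
      unfolding preimage .
  qed
qed

lemma negligible_linear_preimage_iff:
  fixes f :: "'a::euclidean_space \<Rightarrow> 'a"
  assumes "linear f" "inj f"
  shows "negligible (f -` H) \<longleftrightarrow> negligible H"
proof -
  obtain g where "linear g" "\<And>x. g (f x) = x" "\<And>x. f (g x) = x"
    using linear_injective_isomorphism[OF assms] by blast
  then show ?thesis
    using negligible_preimage_iff_diffeomorphic[of f UNIV g UNIV H] assms(1)
    by (simp add: linear_imp_differentiable_on vimage_def)
qed

definition nonzero_pairs :: "(quat \<times> quat) set" where
  "nonzero_pairs = (- {0}) \<times> (- {0})"

lemma open_nonzero_pairs: "open nonzero_pairs"
  by (simp add: nonzero_pairs_def open_Times open_Compl)

lemma emeasure_nonzero_pairs_neq_0: "emeasure lborel nonzero_pairs \<noteq> 0"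
proof -
  have "((1, 0), (1, 0)) \<in> nonzero_pairs"
    by (simp add: nonzero_pairs_def zero_prod_def)
  then have "\<not> negligible nonzero_pairs"
    using open_not_negligible[OF open_nonzero_pairs] by blast
  then show ?thesis
    using negligible_iff_lborel_null[OF borel_open[OF open_nonzero_pairs]] by simp
qed

definition normalize_pair :: "quat \<times> quat \<Rightarrow> (complex^2^2) \<times> (complex^2^2)" where
  "normalize_pair z = (quat_matrix (sgn (fst z)), quat_matrix (sgn (snd z)))"

lemma normalize_pair_in_SU2: "z \<in> nonzero_pairs \<Longrightarrow> normalize_pair z \<in> SU2 \<times> SU2"
  by (auto simp: normalize_pair_def nonzero_pairs_def norm_sgn intro: quat_matrix_in_SU2)

lemma continuous_on_normalize_pair: "continuous_on nonzero_pairs normalize_pair"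
  unfolding normalize_pair_def by (intro continuous_intros) (auto simp: nonzero_pairs_def)

definition mult_pair :: "(complex^2^2) \<times> (complex^2^2) \<Rightarrow> (complex^2^2) \<times> (complex^2^2)
    \<Rightarrow> (complex^2^2) \<times> (complex^2^2)" where
  "mult_pair g x = (fst g ** fst x, snd g ** snd x)"

lemma mult_pair_in_SU2: "g \<in> SU2 \<times> SU2 \<Longrightarrow> x \<in> SU2 \<times> SU2 \<Longrightarrow> mult_pair g x \<in> SU2 \<times> SU2"
  by (auto simp: mult_pair_def SU2_mult)

lemma continuous_on_mult_pair_normalize_pair:
  "continuous_on (UNIV \<times> nonzero_pairs) (\<lambda>x. mult_pair (normalize_pair (snd x)) (fst x))"
proof -
  have "continuous_on (UNIV \<times> nonzero_pairs) (\<lambda>x. normalize_pair (snd x))"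
    by (rule continuous_on_compose2[OF continuous_on_normalize_pair continuous_on_snd[OF continuous_on_id]])
      auto
  then show ?thesis
    unfolding mult_pair_def by (intro continuous_intros)
qed

definition mult_right_pair :: "quat \<times> quat \<Rightarrow> quat \<times> quat \<Rightarrow> quat \<times> quat" where
  "mult_right_pair w z = (quat_mult (fst z) (fst w), quat_mult (snd z) (snd w))"

lemma linear_mult_right_pair: "linear (mult_right_pair w)"
  by (intro linearI)
     (simp_all add: mult_right_pair_def linear_add[OF linear_quat_mult_right]
       linear_scale[OF linear_quat_mult_right])

lemma quat_mult_unit_eq_0_iff: "norm u = 1 \<Longrightarrow> quat_mult p u = 0 \<longleftrightarrow> p = 0"
  by (metis norm_eq_zero norm_quat_mult mult_1_right)

lemma mult_right_pair_in_nonzero_pairs_iff: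
  "norm (fst w) = 1 \<Longrightarrow> norm (snd w) = 1 \<Longrightarrow>
    mult_right_pair w z \<in> nonzero_pairs \<longleftrightarrow> z \<in> nonzero_pairs"
  by (simp add: mult_right_pair_def nonzero_pairs_def mem_Times_iff quat_mult_unit_eq_0_iff)

lemma inj_mult_right_pair:
  assumes "norm (fst w) = 1" "norm (snd w) = 1"
  shows "inj (mult_right_pair w)"
proof -
  have "mult_right_pair w z = (0, 0) \<longleftrightarrow> z = (0, 0)" for z
    using assms by (cases z) (simp add: mult_right_pair_def quat_mult_unit_eq_0_iff)
  then show ?thesis
    by (metis linear_inj_iff_eq_0[OF linear_mult_right_pair] zero_prod_def)
qed

lemma sgn_quat_mult_unit: "norm u = 1 \<Longrightarrow> sgn (quat_mult p u) = quat_mult (sgn p) u"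
  by (simp add: sgn_div_norm norm_quat_mult linear_scale[OF linear_quat_mult_right])

lemma mult_pair_normalize_pair:
  assumes "norm (fst w) = 1" "norm (snd w) = 1"
  shows "mult_pair (normalize_pair z) (quat_matrix (fst w), quat_matrix (snd w))
    = normalize_pair (mult_right_pair w z)"
  using assms
  by (simp add: mult_pair_def normalize_pair_def mult_right_pair_def quat_matrix_mult sgn_quat_mult_unit)

lemma negligible_translate_iff:
  assumes "g \<in> SU2 \<times> SU2"
  shows "negligible {z \<in> nonzero_pairs. mult_pair (normalize_pair z) g \<in> F}
     \<longleftrightarrow> negligible {z \<in> nonzero_pairs. normalize_pair z \<in> F}"
proof -
  obtain u where u: "norm u = 1" "fst g = quat_matrix u"
    using assms SU2_imp_quat_matrix[of "fst g"] by (auto simp: mem_Times_iff)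
  obtain v where v: "norm v = 1" "snd g = quat_matrix v"
    using assms SU2_imp_quat_matrix[of "snd g"] by (auto simp: mem_Times_iff)
  have g: "g = (quat_matrix u, quat_matrix v)"
    using u v by (simp add: prod_eq_iff)
  have "{z \<in> nonzero_pairs. mult_pair (normalize_pair z) g \<in> F}
      = mult_right_pair (u, v) -` {z \<in> nonzero_pairs. normalize_pair z \<in> F}"
    using mult_pair_normalize_pair[of "(u, v)"] mult_right_pair_in_nonzero_pairs_iff[of "(u, v)"] u v
    unfolding g by auto
  moreover have "negligible (mult_right_pair (u, v) -` N) \<longleftrightarrow> negligible N" for N
    by (rule negligible_linear_preimage_iff[OF linear_mult_right_pair inj_mult_right_pair])
      (simp_all add: u v)
  ultimately show ?thesis
    by (simp only:)
qed

lemma haar_SU2_sqD: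
  assumes "haar_SU2_sq \<mu>"
  shows "space \<mu> = SU2 \<times> SU2" and "sets \<mu> = sets (restrict_space borel (SU2 \<times> SU2))"
    and "finite_measure \<mu>" and "emeasure \<mu> (SU2 \<times> SU2) \<noteq> 0"
    and "\<And>g A. g \<in> SU2 \<times> SU2 \<Longrightarrow> A \<in> sets \<mu> \<Longrightarrow>
           emeasure \<mu> (mult_pair g -` A \<inter> space \<mu>) = emeasure \<mu> A"
  using assms unfolding haar_SU2_sq_def mult_pair_def[abs_def] by auto

lemma measurable_ident_haar_SU2_sq:
  assumes "haar_SU2_sq \<mu>"
  shows "(\<lambda>x. x) \<in> \<mu> \<rightarrow>\<^sub>M borel"
  by (subst measurable_cong_sets[OF haar_SU2_sqD(2)[OF assms] refl])
     (rule measurable_restrict_space1, simp)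

definition translation_preimage :: "((complex^2^2) \<times> (complex^2^2)) set
    \<Rightarrow> (((complex^2^2) \<times> (complex^2^2)) \<times> (quat \<times> quat)) set" where
  "translation_preimage B = {x. snd x \<in> nonzero_pairs \<and> mult_pair (normalize_pair (snd x)) (fst x) \<in> B}"

lemma sets_translation_preimage:
  assumes \<mu>: "haar_SU2_sq \<mu>" and B: "B \<in> sets borel"
  shows "translation_preimage B \<inter> space (\<mu> \<Otimes>\<^sub>M lborel) \<in> sets (\<mu> \<Otimes>\<^sub>M lborel)"
proof -
  have "translation_preimage B = {x \<in> UNIV \<times> nonzero_pairs. mult_pair (normalize_pair (snd x)) (fst x) \<in> B}"
    by (auto simp: translation_preimage_def)
  then have G: "translation_preimage B \<in> sets borel"
    using open_nonzero_pairs
    by (simp only:) (intro borel_Collect_continuous_on_open continuous_on_mult_pair_normalize_pair B open_Times, auto)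
  have "(\<lambda>x. (fst x, snd x)) \<in> \<mu> \<Otimes>\<^sub>M lborel \<rightarrow>\<^sub>M borel \<Otimes>\<^sub>M borel"
    using measurable_ident_haar_SU2_sq[OF \<mu>]
    by (intro measurable_Pair) (auto intro: measurable_compose[OF measurable_fst])
  then have "(\<lambda>x. x) \<in> \<mu> \<Otimes>\<^sub>M lborel \<rightarrow>\<^sub>M borel"
    by (simp add: borel_prod)
  from measurable_sets[OF this G] show ?thesis
    by simp
qed

lemma measurable_lborel_translates:
  assumes \<mu>: "haar_SU2_sq \<mu>" and B: "B \<in> sets borel"
  shows "(\<lambda>g. emeasure lborel {z \<in> nonzero_pairs. mult_pair (normalize_pair z) g \<in> B}) \<in> borel_measurable \<mu>"
proof -
  have "(\<lambda>g. emeasure lborel (Pair g -` (translation_preimage B \<inter> space (\<mu> \<Otimes>\<^sub>M lborel))))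
      \<in> borel_measurable \<mu>"
    by (rule lborel.measurable_emeasure_Pair[OF sets_translation_preimage[OF \<mu> B]])
  then show ?thesis
    by (rule measurable_cong[THEN iffD1, rotated])
      (auto simp: space_pair_measure translation_preimage_def)
qed

lemma nn_integral_haar_translates:
  assumes \<mu>: "haar_SU2_sq \<mu>" and B: "B \<in> sets borel"
  shows "(\<integral>\<^sup>+g. emeasure lborel {z \<in> nonzero_pairs. mult_pair (normalize_pair z) g \<in> B} \<partial>\<mu>)
    = emeasure \<mu> (SU2 \<times> SU2 \<inter> B) * emeasure lborel nonzero_pairs"
proof -
  note \<mu>D = haar_SU2_sqD[OF \<mu>]
  interpret finite_measure \<mu> by (rule \<mu>D(3))
  interpret pair_sigma_finite \<mu> lborel by unfold_locales
  define F where "F = SU2 \<times> SU2 \<inter> B"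
  have F: "F \<in> sets \<mu>"
    using B by (auto simp: F_def \<mu>D(2) sets_restrict_space)
  define G where "G = translation_preimage B \<inter> space (\<mu> \<Otimes>\<^sub>M lborel)"
  have G: "G \<in> sets (\<mu> \<Otimes>\<^sub>M lborel)"
    unfolding G_def by (rule sets_translation_preimage[OF \<mu> B])
  have "(\<integral>\<^sup>+g. emeasure lborel {z \<in> nonzero_pairs. mult_pair (normalize_pair z) g \<in> B} \<partial>\<mu>)
      = (\<integral>\<^sup>+g. emeasure lborel (Pair g -` G) \<partial>\<mu>)"
    by (intro nn_integral_cong)
      (auto simp: G_def translation_preimage_def space_pair_measure intro!: arg_cong[where f = "emeasure lborel"])
  also have "\<dots> = emeasure (\<mu> \<Otimes>\<^sub>M lborel) G"
    by (rule lborel.emeasure_pair_measure_alt[OF G, symmetric])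
  also have "\<dots> = (\<integral>\<^sup>+z. emeasure \<mu> ((\<lambda>g. (g, z)) -` G) \<partial>lborel)"
    by (rule emeasure_pair_measure_alt2[OF G])
  also have "\<dots> = (\<integral>\<^sup>+z. emeasure \<mu> F * indicator nonzero_pairs z \<partial>lborel)"
  proof (intro nn_integral_cong)
    fix z
    show "emeasure \<mu> ((\<lambda>g. (g, z)) -` G) = emeasure \<mu> F * indicator nonzero_pairs z"
    proof (cases "z \<in> nonzero_pairs")
      case True
      have "(\<lambda>g. (g, z)) -` G = mult_pair (normalize_pair z) -` F \<inter> space \<mu>"
        using mult_pair_in_SU2[OF normalize_pair_in_SU2[OF True]] True
        by (auto simp: G_def F_def translation_preimage_def space_pair_measure \<mu>D(1))
      then show ?thesis
        using \<mu>D(5)[OF normalize_pair_in_SU2[OF True] F] True by simp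
    qed (simp add: G_def translation_preimage_def)
  qed
  also have "\<dots> = emeasure \<mu> F * emeasure lborel nonzero_pairs"
    using open_nonzero_pairs by (simp add: nn_integral_cmult_indicator borel_open)
  finally show ?thesis
    by (simp add: F_def)
qed

lemma haar_null_iff_negligible:
  assumes \<mu>: "haar_SU2_sq \<mu>" and B: "B \<in> sets borel"
  shows "emeasure \<mu> (SU2 \<times> SU2 \<inter> B) = 0 \<longleftrightarrow> negligible {z \<in> nonzero_pairs. normalize_pair z \<in> B}"
proof -
  note \<mu>D = haar_SU2_sqD[OF \<mu>]
  let ?N = "{z \<in> nonzero_pairs. normalize_pair z \<in> B}"
  let ?f = "\<lambda>g. emeasure lborel {z \<in> nonzero_pairs. mult_pair (normalize_pair z) g \<in> B}"
  have f_eq_0_iff: "?f g = 0 \<longleftrightarrow> negligible ?N" if "g \<in> space \<mu>" for g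
  proof -
    have "{z \<in> nonzero_pairs. mult_pair (normalize_pair z) g \<in> B} \<in> sets borel"
      using open_nonzero_pairs B unfolding mult_pair_def
      by (intro borel_Collect_continuous_on_open continuous_intros continuous_on_normalize_pair) auto
    then show ?thesis
      using negligible_translate_iff[of g B] that \<mu>D(1) by (simp add: negligible_iff_lborel_null)
  qed
  show ?thesis
  proof
    assume "emeasure \<mu> (SU2 \<times> SU2 \<inter> B) = 0"
    then have "AE g in \<mu>. ?f g = 0"
      using nn_integral_haar_translates[OF \<mu> B]
      by (simp add: nn_integral_0_iff_AE[OF measurable_lborel_translates[OF \<mu> B], symmetric])
    with AE_space have "AE g in \<mu>. negligible ?N"
      by eventually_elim (use f_eq_0_iff in blast)
    moreover have "\<not> (AE g in \<mu>. False)"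
      using AE_iff_null[of \<mu> "\<lambda>_. False"] \<mu>D(1,4) sets.top[of \<mu>] by (simp add: null_sets_def)
    ultimately show "negligible ?N"
      by (cases "negligible ?N") auto
  next
    assume "negligible ?N"
    then have "(\<integral>\<^sup>+g. ?f g \<partial>\<mu>) = (\<integral>\<^sup>+g. 0 \<partial>\<mu>)"
      using f_eq_0_iff by (intro nn_integral_cong) simp
    then show "emeasure \<mu> (SU2 \<times> SU2 \<inter> B) = 0"
      using nn_integral_haar_translates[OF \<mu> B] emeasure_nonzero_pairs_neq_0 by simp
  qed
qed

lemma differentiable_real_sqrt:
  assumes "f differentiable (at x within S)" "0 < f x"
  shows "(\<lambda>x. sqrt (f x)) differentiable (at x within S)"
  using assms has_derivative_real_sqrt unfolding differentiable_def by blast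

lemmas real_differentiable_intros = differentiable_divide differentiable_mult differentiable_const
  differentiable_ident differentiable_real_sqrt differentiable_add differentiable_power
  differentiable_diff differentiable_minus

lemma square_less_4_iff: "x\<^sup>2 < 4 \<longleftrightarrow> x \<in> {-2<..<(2::real)}"
  using abs_le_square_iff[of 2 x] by auto

lemma trace_coordinate_left_inverse:
  fixes A a :: real
  assumes "0 < A"
  defines "x \<equiv> 2 * a / sqrt (a\<^sup>2 + A)"
  shows "x \<in> {-2<..<2}" and "sqrt A * x / sqrt (4 - x\<^sup>2) = a"
proof -
  define s where "s = sqrt (a\<^sup>2 + A)"
  have pos: "0 < a\<^sup>2 + A" "a\<^sup>2 + A \<noteq> 0"
    using assms(1) by (simp_all add: add_nonneg_pos add_nonneg_pos[THEN less_imp_neq, THEN not_sym])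
  have s: "0 < s" "s\<^sup>2 = a\<^sup>2 + A"
    using pos(1) by (auto simp: s_def)
  have x: "x = 2 * a / s"
    by (simp add: x_def s_def)
  have sq: "(2 * sqrt A / s)\<^sup>2 = 4 - x\<^sup>2"
    using s assms(1) pos by (simp add: x power_divide power_mult_distrib field_simps)
  moreover have "0 < 2 * sqrt A / s"
    using s assms(1) by simp
  ultimately have sqrt_eq: "sqrt (4 - x\<^sup>2) = 2 * sqrt A / s" and "0 < 4 - x\<^sup>2"
    using real_sqrt_unique[OF sq] s assms(1) by (simp_all flip: sq)
  then show "x \<in> {-2<..<2}"
    using square_less_4_iff by simp
  have "sqrt A * x / (2 * sqrt A / s) = a"
    using s assms(1) by (simp add: x field_simps)
  then show "sqrt A * x / sqrt (4 - x\<^sup>2) = a"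
    by (simp add: sqrt_eq)
qed

lemma trace_coordinate_right_inverse:
  fixes A x :: real
  assumes "0 < A" "x \<in> {-2<..<2}"
  defines "a \<equiv> sqrt A * x / sqrt (4 - x\<^sup>2)"
  shows "2 * a / sqrt (a\<^sup>2 + A) = x"
proof -
  define r where "r = sqrt (4 - x\<^sup>2)"
  have r: "0 < r" "r\<^sup>2 = 4 - x\<^sup>2"
    using assms(2) square_less_4_iff[of x] by (auto simp: r_def)
  have a: "a = sqrt A * x / r"
    by (simp add: a_def r_def)
  have "a\<^sup>2 + A = A * (x\<^sup>2 + r\<^sup>2) / r\<^sup>2"
    using r(1) assms(1) by (simp add: a power_divide power_mult_distrib field_simps)
  also have "\<dots> = (2 * sqrt A / r)\<^sup>2"
    using r assms(1) by (simp add: power_divide power_mult_distrib)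
  finally have sq: "a\<^sup>2 + A = (2 * sqrt A / r)\<^sup>2" .
  have "sqrt (a\<^sup>2 + A) = 2 * sqrt A / r"
    using real_sqrt_unique[OF sq[symmetric]] r assms(1) by simp
  then have "2 * a / sqrt (a\<^sup>2 + A) = 2 * a / (2 * sqrt A / r)"
    by simp
  also have "\<dots> = x"
    using r assms(1) by (simp add: a field_simps)
  finally show ?thesis .
qed

lemma negligible_preimage_trace_coordinate:
  fixes A :: real
  assumes "0 < A"
  shows "negligible {a. 2 * a / sqrt (a\<^sup>2 + A) \<in> H} \<longleftrightarrow> negligible ({-2<..<2} \<inter> H)"
proof -
  define f where "f = (\<lambda>a. 2 * a / sqrt (a\<^sup>2 + A))"
  define g where "g = (\<lambda>x. sqrt A * x / sqrt (4 - x\<^sup>2))"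
  have pos: "0 < a\<^sup>2 + A" "a\<^sup>2 + A \<noteq> 0" for a :: real
    using assms by (simp_all add: add_nonneg_pos add_nonneg_pos[THEN less_imp_neq, THEN not_sym])
  have range: "0 < 4 - x\<^sup>2" "4 - x\<^sup>2 \<noteq> 0" if "x \<in> {-2<..<2}" for x :: real
    using that square_less_4_iff[of x] by auto
  have "f differentiable_on UNIV"
    unfolding f_def using pos
    by (intro differentiable_at_imp_differentiable_on real_differentiable_intros) auto
  moreover have "g differentiable_on {-2<..<2}"
    unfolding g_def using range
    by (intro differentiable_at_imp_differentiable_on real_differentiable_intros) simp_all
  moreover have "f a \<in> {-2<..<2} \<and> g (f a) = a" for a
    using trace_coordinate_left_inverse[OF assms, of a] by (simp add: f_def g_def)
  moreover have "f (g x) = x" if "x \<in> {-2<..<2}" for x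
    using trace_coordinate_right_inverse[OF assms that] by (simp add: f_def g_def)
  ultimately have "negligible {a \<in> UNIV. f a \<in> H} \<longleftrightarrow> negligible ({-2<..<2} \<inter> H)"
    by (intro negligible_preimage_iff_diffeomorphic[where g = g]) auto
  then show ?thesis
    by (simp add: f_def)
qed

lemma commutator_coordinate_left_inverse:
  fixes b c B :: real
  assumes "0 < c" "0 < B" "b \<noteq> 0"
  defines "t \<equiv> 2 - c / (b\<^sup>2 + B)"
  shows "t \<in> {2 - c / B<..<2}" and "sqrt (c / (2 - t) - B) = \<bar>b\<bar>"
proof -
  have pos: "0 < b\<^sup>2 + B"
    using assms(2) by (simp add: add_nonneg_pos)
  have "c / (b\<^sup>2 + B) < c / B"
    using assms pos by (intro divide_strict_left_mono mult_pos_pos) auto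
  then show "t \<in> {2 - c / B<..<2}"
    using assms(1) pos by (simp add: t_def)
  show "sqrt (c / (2 - t) - B) = \<bar>b\<bar>"
    using assms(1) pos by (simp add: t_def)
qed

lemma commutator_coordinate_right_inverse:
  fixes c B t :: real
  assumes "0 < B" "t \<in> {2 - c / B<..<2}"
  defines "b \<equiv> sqrt (c / (2 - t) - B)"
  shows "B < c / (2 - t)" and "0 < b" and "2 - c / (b\<^sup>2 + B) = t"
proof -
  have "2 - t < c / B" "0 < 2 - t"
    using assms(2) by auto
  then have "(2 - t) * B < c"
    using assms(1) by (simp add: pos_less_divide_eq)
  with \<open>0 < 2 - t\<close> show bound: "B < c / (2 - t)"
    by (simp add: less_divide_eq mult.commute)
  moreover from bound assms(1) have "c \<noteq> 0"
    by auto
  ultimately show "0 < b" and "2 - c / (b\<^sup>2 + B) = t"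
    using \<open>0 < 2 - t\<close> by (simp_all add: b_def)
qed

lemma negligible_preimage_commutator_coordinate:
  fixes c B :: real
  assumes "0 < c" "0 < B"
  shows "negligible {b. 2 - c / (b\<^sup>2 + B) \<in> H} \<longleftrightarrow> negligible ({2 - c / B<..<2} \<inter> H)"
proof -
  define f where "f = (\<lambda>b. 2 - c / (b\<^sup>2 + B))"
  define g where "g = (\<lambda>t. sqrt (c / (2 - t) - B))"
  let ?V = "{2 - c / B<..<2}"
  have pos: "0 < b\<^sup>2 + B" "b\<^sup>2 + B \<noteq> 0" for b :: real
    using assms by (simp_all add: add_nonneg_pos add_nonneg_pos[THEN less_imp_neq, THEN not_sym])
  note left = commutator_coordinate_left_inverse[OF assms]
  note right = commutator_coordinate_right_inverse[OF assms(2)]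
  have f_diff: "f differentiable_on S" for S
    unfolding f_def using pos
    by (intro differentiable_at_imp_differentiable_on real_differentiable_intros) auto
  have g_diff: "g differentiable_on ?V" and neg_g_diff: "(\<lambda>t. - g t) differentiable_on ?V"
    unfolding g_def using right(1)
    by (intro differentiable_at_imp_differentiable_on real_differentiable_intros; force)+
  have "negligible {b \<in> {0<..}. f b \<in> H} \<longleftrightarrow> negligible (?V \<inter> H)"
    by (rule negligible_preimage_iff_diffeomorphic[OF refl f_diff g_diff])
      (use left right in \<open>auto simp: f_def g_def\<close>)
  moreover have "negligible {b \<in> {..<0}. f b \<in> H} \<longleftrightarrow> negligible (?V \<inter> H)"
    by (rule negligible_preimage_iff_diffeomorphic[OF refl f_diff neg_g_diff])
      (use left right in \<open>auto simp: f_def g_def\<close>)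
  moreover have "{b. 2 - c / (b\<^sup>2 + B) \<in> H}
      = {b \<in> {0<..}. f b \<in> H} \<union> {b \<in> {..<0}. f b \<in> H} \<union> ({0} \<inter> {b. f b \<in> H})"
    by (auto simp: f_def)
  moreover have "negligible ({0} \<inter> {b. f b \<in> H})"
    by (rule negligible_subset[OF negligible_sing]) blast
  ultimately show ?thesis
    by (simp add: negligible_Un_eq)
qed

definition D_lens :: "real \<Rightarrow> (real \<times> real) set" where
  "D_lens s = {(x, t). 2 - s * (4 - x\<^sup>2) < t \<and> t < 2}"

lemma D_lens_eq: "D_lens s = {z. 2 - s * (4 - (fst z)\<^sup>2) < snd z \<and> snd z < 2}"
  by (auto simp: D_lens_def)

lemma sets_D_lens: "D_lens s \<in> sets borel"
  unfolding D_lens_eq by (intro borel_open open_Collect_conj open_Collect_less continuous_intros)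

lemma D_lens_fst: "0 < s \<Longrightarrow> (x, t) \<in> D_lens s \<Longrightarrow> x \<in> {-2<..<2}"
  using zero_less_mult_iff[of s "4 - x\<^sup>2"] square_less_4_iff[of x] by (auto simp: D_lens_def)

lemma D_lens_mono:
  assumes "0 < s" "s \<le> s'"
  shows "D_lens s \<subseteq> D_lens s'"
proof safe
  fix x t assume xt: "(x, t) \<in> D_lens s"
  then have "0 < 4 - x\<^sup>2"
    using D_lens_fst[OF assms(1) xt] square_less_4_iff[of x] by simp
  then have "s * (4 - x\<^sup>2) \<le> s' * (4 - x\<^sup>2)"
    using assms by (intro mult_right_mono) auto
  then show "(x, t) \<in> D_lens s'"
    using xt by (auto simp: D_lens_def)
qed

lemma D_lens_subset_D_set:
  assumes "0 < s" "s \<le> 1"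
  shows "D_lens s \<subseteq> D_set"
proof safe
  fix x t assume "(x, t) \<in> D_lens s"
  then have xt: "(x, t) \<in> D_lens 1"
    using D_lens_mono[OF assms] by blast
  then have "x \<in> {-2<..<2}"
    by (rule D_lens_fst[rotated]) simp
  moreover have t: "x\<^sup>2 - 2 < t" "t < 2"
    using xt by (auto simp: D_lens_def)
  moreover have "-2 \<le> t"
    using t zero_le_power2[of x] by linarith
  ultimately show "(x, t) \<in> D_set"
    by (auto simp: D_set_def)
qed

lemma negligible_parabola: "negligible {z :: real \<times> real. snd z = (fst z)\<^sup>2 - 2}"
proof -
  have "((\<lambda>x::real. (x, x\<^sup>2 - 2)) has_derivative (\<lambda>h. (h, 2 * x * h))) (at x)" for x
    by (auto intro!: derivative_eq_intros)
  then have "negligible (range (\<lambda>x::real. (x, x\<^sup>2 - 2)))"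
    by (intro negligible_differentiable_image_lowdim differentiable_at_imp_differentiable_on)
      (auto intro: differentiableI)
  moreover have "{z :: real \<times> real. snd z = (fst z)\<^sup>2 - 2} \<subseteq> range (\<lambda>x::real. (x, x\<^sup>2 - 2))"
    by (auto simp: image_iff prod_eq_iff)
  ultimately show ?thesis
    by (rule negligible_subset)
qed

lemma negligible_snd_eq: "negligible {z :: 'a::euclidean_space \<times> real. snd z = c}"
proof -
  have "{z :: 'a \<times> real. snd z = c} = {z. (0, 1) \<bullet> z = c}"
    by (simp add: inner_prod_def)
  then show ?thesis
    using negligible_hyperplane[of "(0, 1) :: 'a \<times> real" c] by (simp add: zero_prod_def)
qed

lemma D_set_subset_Union_D_lens:
  "D_set \<subseteq> (\<Union>n. D_lens (1 - inverse (real (Suc (Suc n))))) \<union> {z. snd z = 2} \<union> {z. snd z = (fst z)\<^sup>2 - 2}"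
proof
  fix z assume "z \<in> D_set"
  obtain x t where xt: "z = (x, t)"
    by fastforce
  show "z \<in> (\<Union>n. D_lens (1 - inverse (real (Suc (Suc n))))) \<union> {z. snd z = 2} \<union> {z. snd z = (fst z)\<^sup>2 - 2}"
  proof (cases "t = 2 \<or> t = x\<^sup>2 - 2")
    case True
    then show ?thesis
      by (auto simp: xt)
  next
    case False
    then have t: "x\<^sup>2 - 2 < t" "t < 2"
      using \<open>z \<in> D_set\<close> by (auto simp: xt D_set_def)
    define r where "r = (2 - t) / (4 - x\<^sup>2)"
    have "0 < 4 - x\<^sup>2" "r < 1"
      using t by (auto simp: r_def divide_less_eq)
    obtain n where "0 < n" "inverse (real n) < 1 - r"
      using ex_inverse_of_nat_less[of "1 - r"] \<open>r < 1\<close> by auto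
    moreover have "inverse (real (Suc (Suc n))) < inverse (real n)"
      using \<open>0 < n\<close> by (simp add: field_simps)
    ultimately have "r < 1 - inverse (real (Suc (Suc n)))"
      by linarith
    then have "2 - t < (1 - inverse (real (Suc (Suc n)))) * (4 - x\<^sup>2)"
      unfolding r_def using pos_divide_less_eq[OF \<open>0 < 4 - x\<^sup>2\<close>] by blast
    then have "z \<in> D_lens (1 - inverse (real (Suc (Suc n))))"
      using t by (auto simp: xt D_lens_def)
    then show ?thesis
      by blast
  qed
qed

lemma not_negligible_D_lens:
  assumes "\<not> negligible (E \<inter> D_set)"
  obtains s where "0 < s" "s < 1" "\<not> negligible (E \<inter> D_lens s)"
proof -
  let ?s = "\<lambda>n::nat. 1 - inverse (real (Suc (Suc n)))"
  have "\<exists>n. \<not> negligible (E \<inter> D_lens (?s n))"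
  proof (rule ccontr)
    assume "\<nexists>n. \<not> negligible (E \<inter> D_lens (?s n))"
    then have "negligible (\<Union>n. E \<inter> D_lens (?s n))"
      by (intro negligible_Union_nat) blast
    then have "negligible ((\<Union>n. E \<inter> D_lens (?s n)) \<union> {z. snd z = 2} \<union> {z. snd z = (fst z)\<^sup>2 - 2})"
      using negligible_snd_eq negligible_parabola by (simp add: negligible_Un_eq)
    moreover have "E \<inter> D_set \<subseteq> (\<Union>n. E \<inter> D_lens (?s n)) \<union> {z. snd z = 2} \<union> {z. snd z = (fst z)\<^sup>2 - 2}"
      using D_set_subset_Union_D_lens by blast
    ultimately show False
      using assms negligible_subset by blast
  qed
  then obtain n where "\<not> negligible (E \<inter> D_lens (?s n))"
    by blast
  moreover have "0 < ?s n" "?s n < 1"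
    by (auto simp: field_simps)
  ultimately show ?thesis
    using that by blast
qed

lemma AE_negligible_D_lens_iff:
  fixes r :: "'a::euclidean_space \<Rightarrow> real"
  assumes r: "AE v in lborel. 0 < r v \<and> r v \<le> 1"
    and large: "\<And>s. s < 1 \<Longrightarrow> \<not> negligible {v. s < r v}"
  shows "(AE v in lborel. negligible (E \<inter> D_lens (r v))) \<longleftrightarrow> negligible (E \<inter> D_set)"
proof
  assume "AE v in lborel. negligible (E \<inter> D_lens (r v))"
  then have null: "negligible {v. \<not> negligible (E \<inter> D_lens (r v))}"
    by (simp add: AE_lborel_iff_negligible)
  show "negligible (E \<inter> D_set)"
  proof (rule ccontr)
    assume "\<not> negligible (E \<inter> D_set)"
    then obtain s where s: "0 < s" "s < 1" "\<not> negligible (E \<inter> D_lens s)"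
      by (rule not_negligible_D_lens)
    have "{v. s < r v} \<subseteq> {v. \<not> negligible (E \<inter> D_lens (r v))}"
    proof clarify
      fix v assume "s < r v" "negligible (E \<inter> D_lens (r v))"
      moreover have "E \<inter> D_lens s \<subseteq> E \<inter> D_lens (r v)"
        using D_lens_mono[of s "r v"] s \<open>s < r v\<close> by auto
      ultimately show False
        using s(3) negligible_subset by blast
    qed
    then show False
      using large[OF \<open>s < 1\<close>] null negligible_subset by blast
  qed
next
  assume "negligible (E \<inter> D_set)"
  from r show "AE v in lborel. negligible (E \<inter> D_lens (r v))"
    by eventually_elim (use D_lens_subset_D_set \<open>negligible (E \<inter> D_set)\<close> negligible_subset in blast)
qed

lemma Pi_adj_normalize_pair:
  fixes p q :: quat
  assumes "p \<noteq> 0" "q \<noteq> 0"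
  shows "Pi_adj (normalize_pair (p, q)) =
    (2 * fst p / norm p, 2 - 4 * (norm (cross3 (snd p) (snd q)))\<^sup>2 / (norm p * norm q)\<^sup>2)"
proof -
  have "cross3 (snd (sgn p)) (snd (sgn q)) = inverse (norm p * norm q) *\<^sub>R cross3 (snd p) (snd q)"
    by (simp add: sgn_div_norm cross_mult_left cross_mult_right)
  then have "(norm (cross3 (snd (sgn p)) (snd (sgn q))))\<^sup>2
      = (norm (cross3 (snd p) (snd q)))\<^sup>2 / (norm p * norm q)\<^sup>2"
    by (simp add: power_mult_distrib power_inverse divide_inverse)
  moreover have "fst (sgn p) = fst p / norm p"
    by (simp add: sgn_div_norm divide_inverse_commute)
  ultimately show ?thesis
    using assms by (simp add: normalize_pair_def Pi_adj_quat_matrix norm_sgn)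
qed

(* Coordinates in which Fubini fixes the vector parts (a, b) and leaves the scalar parts
   (a0, b0) free. *)
definition quat_pair_of_parts :: "((real^3) \<times> (real^3)) \<times> (real \<times> real) \<Rightarrow> quat \<times> quat" where
  "quat_pair_of_parts v = ((fst (snd v), fst (fst v)), (snd (snd v), snd (fst v)))"

lemma linear_quat_pair_of_parts: "linear quat_pair_of_parts"
  by (intro linearI) (simp_all add: quat_pair_of_parts_def)

lemma negligible_quat_pair_of_parts_vimage_iff:
  "negligible (quat_pair_of_parts -` N) \<longleftrightarrow> negligible N"
proof -
  define g where "g z = ((snd (fst z), snd (snd z)), (fst (fst z), fst (snd z)))" for z :: "quat \<times> quat"
  have "linear g"
    by (intro linearI) (simp_all add: g_def)
  then show ?thesis
    using negligible_preimage_iff_diffeomorphic[of quat_pair_of_parts UNIV g UNIV N]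
      linear_quat_pair_of_parts
    by (simp add: linear_imp_differentiable_on g_def quat_pair_of_parts_def vimage_def)
qed

lemma negligible_cross3_eq_0: "negligible {v :: (real^3) \<times> (real^3). cross3 (fst v) (snd v) = 0}"
proof -
  have "{v :: (real^3) \<times> (real^3). cross3 (fst v) (snd v) = 0}
      \<subseteq> range (\<lambda>w :: (real^3) \<times> real. (fst w, snd w *\<^sub>R fst w)) \<union> range (\<lambda>b :: real^3. (0, b))"
  proof
    fix v :: "(real^3) \<times> (real^3)"
    assume "v \<in> {v. cross3 (fst v) (snd v) = 0}"
    then have "fst v = 0 \<or> (\<exists>c. snd v = c *\<^sub>R fst v)"
      unfolding mem_Collect_eq cross_eq_0 collinear_lemma by (metis scale_zero_left)
    then show "v \<in> range (\<lambda>w. (fst w, snd w *\<^sub>R fst w)) \<union> range (\<lambda>b. (0, b))"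
    proof
      assume "fst v = 0"
      then have "v = (0, snd v)"
        by (simp add: prod_eq_iff)
      then show ?thesis
        by blast
    next
      assume "\<exists>c. snd v = c *\<^sub>R fst v"
      then obtain c where "snd v = c *\<^sub>R fst v"
        by blast
      then have "v = (\<lambda>w. (fst w, snd w *\<^sub>R fst w)) (fst v, c)"
        by (simp add: prod_eq_iff)
      then show ?thesis
        by blast
    qed
  qed
  moreover have "((\<lambda>w :: (real^3) \<times> real. (fst w, snd w *\<^sub>R fst w)) has_derivative
      (\<lambda>h. (fst h, snd w *\<^sub>R fst h + snd h *\<^sub>R fst w))) (at w)" for w
    by (auto intro!: derivative_eq_intros)
  then have "negligible (range (\<lambda>w :: (real^3) \<times> real. (fst w, snd w *\<^sub>R fst w)))"
    by (intro negligible_differentiable_image_lowdim differentiable_at_imp_differentiable_on)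
      (auto intro: differentiableI)
  moreover have "((\<lambda>b :: real^3. ((0 :: real^3), b)) has_derivative (\<lambda>h. (0, h))) (at b)" for b
    by (auto intro!: derivative_eq_intros)
  then have "negligible (range (\<lambda>b :: real^3. ((0 :: real^3), b)))"
    by (intro negligible_differentiable_image_lowdim differentiable_at_imp_differentiable_on)
      (auto intro: differentiableI)
  ultimately show ?thesis
    using negligible_Un negligible_subset by blast
qed

definition sin_sq_angle :: "(real^3) \<times> (real^3) \<Rightarrow> real" where
  "sin_sq_angle v = (norm (cross3 (fst v) (snd v)))\<^sup>2 / ((norm (fst v))\<^sup>2 * (norm (snd v))\<^sup>2)"

lemma AE_sin_sq_angle_bounds: "AE v in lborel. 0 < sin_sq_angle v \<and> sin_sq_angle v \<le> 1"
proof -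
  have "0 < sin_sq_angle v \<and> sin_sq_angle v \<le> 1" if "cross3 (fst v) (snd v) \<noteq> 0" for v
  proof -
    have "fst v \<noteq> 0" "snd v \<noteq> 0"
      using that by auto
    moreover have "(norm (cross3 (fst v) (snd v)))\<^sup>2 \<le> (norm (fst v))\<^sup>2 * (norm (snd v))\<^sup>2"
      using norm_cross_dot[of "fst v" "snd v"] zero_le_power2[of "fst v \<bullet> snd v"]
      unfolding power_mult_distrib by linarith
    ultimately show ?thesis
      using that by (simp add: sin_sq_angle_def divide_le_eq_1)
  qed
  then have "{v. \<not> (0 < sin_sq_angle v \<and> sin_sq_angle v \<le> 1)} \<subseteq> {v. cross3 (fst v) (snd v) = 0}"
    by auto
  then show ?thesis
    unfolding AE_lborel_iff_negligible using negligible_cross3_eq_0 negligible_subset by blast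
qed

lemma not_negligible_sin_sq_angle_greater:
  assumes "s < 1"
  shows "\<not> negligible {v. s < sin_sq_angle v}"
proof -
  let ?U = "{v. s * ((norm (fst v))\<^sup>2 * (norm (snd v))\<^sup>2) < (norm (cross3 (fst v) (snd v)))\<^sup>2}"
  have "open ?U"
    by (intro open_Collect_less continuous_intros continuous_on_cross)
  moreover have "(vector [1, 0, 0], vector [0, 1, 0]) \<in> ?U"
    using assms unfolding mem_Collect_eq norm_vec3_sq by (simp add: cross_components)
  moreover have "?U \<subseteq> {v. s < sin_sq_angle v}"
  proof
    fix v assume "v \<in> ?U"
    then have v: "s * ((norm (fst v))\<^sup>2 * (norm (snd v))\<^sup>2) < (norm (cross3 (fst v) (snd v)))\<^sup>2"
      by simp
    then have "fst v \<noteq> 0" "snd v \<noteq> 0"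
      by auto
    with v show "v \<in> {v. s < sin_sq_angle v}"
      by (simp add: sin_sq_angle_def less_divide_eq)
  qed
  ultimately show ?thesis
    using open_not_negligible negligible_subset by blast
qed

lemma negligible_commutator_slice_iff:
  fixes A B S a :: real
  assumes A: "0 < A" and B: "0 < B" and S: "0 < S"
  defines "x \<equiv> 2 * a / sqrt (a\<^sup>2 + A)"
  shows "negligible {b. (x, 2 - 4 * S / ((a\<^sup>2 + A) * (b\<^sup>2 + B))) \<in> E}
    \<longleftrightarrow> negligible (Pair x -` (E \<inter> D_lens (S / (A * B))))"
proof -
  define c where "c = 4 * S / (a\<^sup>2 + A)"
  have pos: "0 < a\<^sup>2 + A" "a\<^sup>2 + A \<noteq> 0"
    using A by (simp_all add: add_nonneg_pos add_nonneg_pos[THEN less_imp_neq, THEN not_sym])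
  have "0 < c"
    using S pos by (simp add: c_def)
  have "x\<^sup>2 = 4 * a\<^sup>2 / (a\<^sup>2 + A)"
    using pos by (simp add: x_def power_divide power_mult_distrib)
  then have "4 - x\<^sup>2 = 4 * A / (a\<^sup>2 + A)"
    using pos by (simp add: field_simps)
  moreover have "c / B = S / (A * B) * (4 * A / (a\<^sup>2 + A))"
    using A B pos by (simp add: c_def field_simps)
  ultimately have "c / B = S / (A * B) * (4 - x\<^sup>2)"
    by simp
  then have lens: "{2 - c / B<..<2} \<inter> Pair x -` E = Pair x -` (E \<inter> D_lens (S / (A * B)))"
    by (auto simp: D_lens_def)
  have "{b. (x, 2 - 4 * S / ((a\<^sup>2 + A) * (b\<^sup>2 + B))) \<in> E} = {b. 2 - c / (b\<^sup>2 + B) \<in> Pair x -` E}"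
    by (simp add: c_def)
  then show ?thesis
    unfolding lens[symmetric] by (simp only: negligible_preimage_commutator_coordinate[OF \<open>0 < c\<close> B])
qed

lemma negligible_section_preimage_iff:
  fixes A B S :: real
  assumes A: "0 < A" and B: "0 < B" and S: "0 < S" and E: "E \<in> sets borel"
  shows "negligible {y. (2 * fst y / sqrt ((fst y)\<^sup>2 + A),
      2 - 4 * S / (((fst y)\<^sup>2 + A) * ((snd y)\<^sup>2 + B))) \<in> E}
    \<longleftrightarrow> negligible (E \<inter> D_lens (S / (A * B)))"
proof -
  define X where "X = {y. (2 * fst y / sqrt ((fst y)\<^sup>2 + A),
      2 - 4 * S / (((fst y)\<^sup>2 + A) * ((snd y)\<^sup>2 + B))) \<in> E}"
  define Y where "Y = E \<inter> D_lens (S / (A * B))"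
  have pos: "a\<^sup>2 + A \<noteq> 0" "a\<^sup>2 + B \<noteq> 0" for a :: real
    using A B by (simp_all add: add_nonneg_pos[THEN less_imp_neq, THEN not_sym])
  have "continuous_on UNIV (\<lambda>y::real \<times> real. (2 * fst y / sqrt ((fst y)\<^sup>2 + A),
      2 - 4 * S / (((fst y)\<^sup>2 + A) * ((snd y)\<^sup>2 + B))))"
    using pos by (intro continuous_intros) auto
  then have X: "X \<in> sets borel"
    unfolding X_def using measurable_sets_borel[OF borel_measurable_continuous_onI E]
    by (simp add: vimage_def)
  have Y: "Y \<in> sets borel"
    using E sets_D_lens by (simp add: Y_def)
  have "{x. \<not> negligible (Pair x -` Y)} \<subseteq> {-2<..<2}"
  proof
    fix x assume "x \<in> {x. \<not> negligible (Pair x -` Y)}"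
    then have "Pair x -` Y \<noteq> {}"
      by auto
    then obtain t where "(x, t) \<in> D_lens (S / (A * B))"
      by (auto simp: Y_def)
    then show "x \<in> {-2<..<2}"
      using A B S by (intro D_lens_fst[of "S / (A * B)"]) simp_all
  qed
  then have H: "{-2<..<2} \<inter> {x. \<not> negligible (Pair x -` Y)} = {x. \<not> negligible (Pair x -` Y)}"
    by blast
  have "negligible X \<longleftrightarrow> (AE a in lborel. negligible (Pair a -` X))"
    by (rule negligible_iff_AE_negligible_sections[OF X])
  also have "\<dots> \<longleftrightarrow> negligible {a. 2 * a / sqrt (a\<^sup>2 + A) \<in> {x. \<not> negligible (Pair x -` Y)}}"
    using negligible_commutator_slice_iff[OF A B S]
    by (simp add: AE_lborel_iff_negligible X_def Y_def)
  also have "\<dots> \<longleftrightarrow> negligible {x. \<not> negligible (Pair x -` Y)}"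
    unfolding negligible_preimage_trace_coordinate[OF A] H ..
  also have "\<dots> \<longleftrightarrow> negligible Y"
    by (simp add: AE_lborel_iff_negligible negligible_iff_AE_negligible_sections[OF Y])
  finally show ?thesis
    by (simp add: X_def Y_def)
qed

lemma negligible_Phi_section_iff:
  assumes E: "E \<in> sets borel" and v: "cross3 (fst v) (snd v) \<noteq> 0"
  shows "negligible (Pair v -` (quat_pair_of_parts -` {z \<in> nonzero_pairs. Pi_adj (normalize_pair z) \<in> E}))
    \<longleftrightarrow> negligible (E \<inter> D_lens (sin_sq_angle v))"
proof -
  obtain a b where v_eq: "v = (a, b)"
    by fastforce
  have "a \<noteq> 0" "b \<noteq> 0"
    using v by (auto simp: v_eq)
  then have pos: "0 < (norm a)\<^sup>2" "0 < (norm b)\<^sup>2" "0 < (norm (cross3 a b))\<^sup>2"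
    using v by (auto simp: v_eq)
  have "Pair v -` (quat_pair_of_parts -` {z \<in> nonzero_pairs. Pi_adj (normalize_pair z) \<in> E})
     = {y. (2 * fst y / sqrt ((fst y)\<^sup>2 + (norm a)\<^sup>2),
            2 - 4 * (norm (cross3 a b))\<^sup>2 / (((fst y)\<^sup>2 + (norm a)\<^sup>2) * ((snd y)\<^sup>2 + (norm b)\<^sup>2))) \<in> E}"
    using \<open>a \<noteq> 0\<close> \<open>b \<noteq> 0\<close>
    by (auto simp: v_eq quat_pair_of_parts_def nonzero_pairs_def zero_prod_def Pi_adj_normalize_pair
        norm_Pair power_mult_distrib)
  then show ?thesis
    using negligible_section_preimage_iff[OF pos E] by (simp add: sin_sq_angle_def v_eq)
qed

lemma negligible_Phi_preimage_iff:
  assumes E: "E \<in> sets borel"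
  shows "negligible {z \<in> nonzero_pairs. Pi_adj (normalize_pair z) \<in> E} \<longleftrightarrow> negligible (E \<inter> D_set)"
proof -
  let ?N = "{z \<in> nonzero_pairs. Pi_adj (normalize_pair z) \<in> E}"
  have "?N \<in> sets borel"
    using open_nonzero_pairs E
    by (intro borel_Collect_continuous_on_open continuous_on_compose2[OF continuous_on_Pi_adj
        continuous_on_normalize_pair]) auto
  then have W: "quat_pair_of_parts -` ?N \<in> sets borel"
    using linear_quat_pair_of_parts
    by (intro measurable_sets_borel[OF borel_measurable_continuous_onI])
      (simp_all add: linear_continuous_on linear_conv_bounded_linear)
  have "{v. \<not> (negligible (Pair v -` (quat_pair_of_parts -` ?N))
      \<longleftrightarrow> negligible (E \<inter> D_lens (sin_sq_angle v)))} \<subseteq> {v. cross3 (fst v) (snd v) = 0}"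
    using negligible_Phi_section_iff[OF E] by blast
  then have slices: "AE v in lborel. negligible (Pair v -` (quat_pair_of_parts -` ?N))
      \<longleftrightarrow> negligible (E \<inter> D_lens (sin_sq_angle v))"
    unfolding AE_lborel_iff_negligible using negligible_cross3_eq_0 negligible_subset by blast
  have "negligible ?N \<longleftrightarrow> negligible (quat_pair_of_parts -` ?N)"
    by (rule negligible_quat_pair_of_parts_vimage_iff[symmetric])
  also have "\<dots> \<longleftrightarrow> (AE v in lborel. negligible (Pair v -` (quat_pair_of_parts -` ?N)))"
    by (rule negligible_iff_AE_negligible_sections[OF W])
  also have "\<dots> \<longleftrightarrow> (AE v in lborel. negligible (E \<inter> D_lens (sin_sq_angle v)))"
  proof
    assume "AE v in lborel. negligible (Pair v -` (quat_pair_of_parts -` ?N))"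
    with slices show "AE v in lborel. negligible (E \<inter> D_lens (sin_sq_angle v))"
      by eventually_elim blast
  next
    assume "AE v in lborel. negligible (E \<inter> D_lens (sin_sq_angle v))"
    with slices show "AE v in lborel. negligible (Pair v -` (quat_pair_of_parts -` ?N))"
      by eventually_elim blast
  qed
  also have "\<dots> \<longleftrightarrow> negligible (E \<inter> D_set)"
    by (rule AE_negligible_D_lens_iff[OF AE_sin_sq_angle_bounds not_negligible_sin_sq_angle_greater])
  finally show ?thesis .
qed

lemma closed_D_set: "closed D_set"
proof -
  have D_set_eq: "D_set = {z. -2 \<le> fst z \<and> fst z \<le> 2 \<and> -2 \<le> snd z \<and> snd z \<le> 2 \<and> (fst z)\<^sup>2 - 2 \<le> snd z}"
    by (auto simp: D_set_def)
  show ?thesis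
    unfolding D_set_eq by (intro closed_Collect_conj closed_Collect_le continuous_intros)
qed

lemma measurable_Pi_map:
  assumes "haar_SU2_sq \<mu>"
  shows "Pi_map \<in> \<mu> \<rightarrow>\<^sub>M borel"
proof -
  have "Pi_adj \<in> \<mu> \<rightarrow>\<^sub>M borel"
    using measurable_compose[OF measurable_ident_haar_SU2_sq[OF assms]
        borel_measurable_continuous_onI[OF continuous_on_Pi_adj]] by simp
  then show ?thesis
    by (rule measurable_cong[THEN iffD1, rotated])
      (simp add: haar_SU2_sqD(1)[OF assms] Pi_map_eq_Pi_adj)
qed

lemma null_sets_distr_Pi_map:
  assumes \<mu>: "haar_SU2_sq \<mu>"
  shows "null_sets (distr \<mu> borel Pi_map) = null_sets (density lborel (indicator D_set))"
proof (intro set_eqI)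
  fix E
  have D: "D_set \<in> sets borel"
    by (simp add: borel_closed closed_D_set)
  show "E \<in> null_sets (distr \<mu> borel Pi_map) \<longleftrightarrow> E \<in> null_sets (density lborel (indicator D_set))"
  proof (cases "E \<in> sets borel")
    case True
    have "Pi_adj -` E \<in> sets borel"
      using measurable_sets_borel[OF borel_measurable_continuous_onI[OF continuous_on_Pi_adj] True] .
    moreover have "Pi_map -` E \<inter> space \<mu> = SU2 \<times> SU2 \<inter> Pi_adj -` E"
      using Pi_map_eq_Pi_adj by (auto simp: haar_SU2_sqD(1)[OF \<mu>])
    ultimately have "E \<in> null_sets (distr \<mu> borel Pi_map)
        \<longleftrightarrow> negligible {z \<in> nonzero_pairs. normalize_pair z \<in> Pi_adj -` E}"
      using True measurable_Pi_map[OF \<mu>] haar_null_iff_negligible[OF \<mu>]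
      by (simp add: null_sets_def emeasure_distr)
    also have "\<dots> \<longleftrightarrow> negligible (E \<inter> D_set)"
      using negligible_Phi_preimage_iff[OF True] by simp
    also have "\<dots> \<longleftrightarrow> E \<in> null_sets (density lborel (indicator D_set))"
      using True D
      by (simp add: null_sets_def emeasure_restricted negligible_iff_lborel_null Int_commute)
    finally show ?thesis .
  qed (simp add: null_sets_def)
qed

theorem lemma3p2:
  fixes \<mu> :: "((complex^2^2) \<times> (complex^2^2)) measure"
  assumes "haar_SU2_sq \<mu>"
  shows "Pi_map ` (SU2 \<times> SU2) = D_set
    \<and> absolutely_continuous (distr \<mu> borel Pi_map) (density lborel (indicator D_set))
    \<and> absolutely_continuous (density lborel (indicator D_set)) (distr \<mu> borel Pi_map)"
  using Pi_map_image null_sets_distr_Pi_map[OF assms] by (simp add: absolutely_continuous_def)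

end
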